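(* Consider a scenario submodular cover instance: finite ground set $U$, monotone submodular $f:2^U\to\mathbb{Z}_{\ge 0}$ with $Q:=f(U)$, items $\mathbf{X}_1,\dots,\mathbf{X}_m$ with costs $c_e>0$ and explicit joint distribution with $s$ scenarios (scenario $\omega$ has probability $p_\omega>0$, and in it $\mathbf{X}_e$ realizes to $X_e(\omega)\in U$), where in every scenario the realizations of all items cover $f$. For a parameter $\delta\in(0,1)$, the partial cover version asks to probe items $\mathbf{R}$ with realization $R\subseteq U$ until either (i) the number of scenarios compatible with the observed realizations is less than $\delta s$, or (ii) $f(R)=Q$. There is a non-adaptive algorithm for this partial cover version with expected cost $O\!\left(\frac{1}{\delta}\left(\ln\frac{1}{\delta}+\log Q\right)\right)$ times the expected cost of an optimal adaptive solution for the (full) scenario submodular cover problem.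
   Context: A scenario $\omega$ is compatible with the observed realizations if every probed item $\mathbf{X}_e$ has realized to $X_e(\omega)$. A non-adaptive algorithm fixes an ordering of all items before observing any realization and then probes items in this order until the stopping condition holds; its cost is the expected total cost of probed items. An adaptive solution for full cover chooses each next item based on all realizations observed so far and must reach $f(S)=Q$ with probability one; the optimal one has minimum expected cost. *)

theory Defs
  imports Complex_Main
begin

text \<open>X e w is the realization of item e in scenario w.\<close>

definition ssc_instance ::
  "nat set \<Rightarrow> (nat set \<Rightarrow> nat) \<Rightarrow> nat set \<Rightarrow> nat set \<Rightarrow> (nat \<Rightarrow> real) \<Rightarrow> (nat \<Rightarrow> real)
   \<Rightarrow> (nat \<Rightarrow> nat \<Rightarrow> nat) \<Rightarrow> bool" where
  "ssc_instance U f I Omega c p X \<longleftrightarrow>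
     finite U \<and> finite I \<and> finite Omega \<and>
     (\<forall>A B. A \<subseteq> B \<and> B \<subseteq> U \<longrightarrow> f A \<le> f B) \<and>
     (\<forall>A B. A \<subseteq> U \<and> B \<subseteq> U \<longrightarrow> f (A \<union> B) + f (A \<inter> B) \<le> f A + f B) \<and>
     (\<forall>e\<in>I. c e > 0) \<and>
     (\<forall>w\<in>Omega. p w > 0) \<and> (\<Sum>w\<in>Omega. p w) = 1 \<and>
     (\<forall>e\<in>I. \<forall>w\<in>Omega. X e w \<in> U) \<and>
     (\<forall>w\<in>Omega. f ((\<lambda>e. X e w) ` I) = f U)"

definition compat :: "(nat \<Rightarrow> nat \<Rightarrow> nat) \<Rightarrow> nat set \<Rightarrow> nat set \<Rightarrow> nat \<Rightarrow> nat set" where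
  "compat X Omega S w = {w'\<in>Omega. \<forall>e\<in>S. X e w' = X e w}"

definition partial_stop ::
  "nat set \<Rightarrow> (nat set \<Rightarrow> nat) \<Rightarrow> nat set \<Rightarrow> (nat \<Rightarrow> nat \<Rightarrow> nat) \<Rightarrow> real \<Rightarrow> nat set \<Rightarrow> nat \<Rightarrow> bool" where
  "partial_stop U f Omega X \<delta> S w \<longleftrightarrow>
     real (card (compat X Omega S w)) < \<delta> * real (card Omega) \<or>
     f ((\<lambda>e. X e w) ` S) = f U"

definition na_stop_time ::
  "nat set \<Rightarrow> (nat set \<Rightarrow> nat) \<Rightarrow> nat set \<Rightarrow> (nat \<Rightarrow> nat \<Rightarrow> nat) \<Rightarrow> real \<Rightarrow> nat list \<Rightarrow> nat \<Rightarrow> nat" where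
  "na_stop_time U f Omega X \<delta> \<sigma> w = (LEAST k. partial_stop U f Omega X \<delta> (set (take k \<sigma>)) w)"

definition na_partial_cost ::
  "nat set \<Rightarrow> (nat set \<Rightarrow> nat) \<Rightarrow> nat set \<Rightarrow> (nat \<Rightarrow> real) \<Rightarrow> (nat \<Rightarrow> real)
   \<Rightarrow> (nat \<Rightarrow> nat \<Rightarrow> nat) \<Rightarrow> real \<Rightarrow> nat list \<Rightarrow> real" where
  "na_partial_cost U f Omega c p X \<delta> \<sigma> =
     (\<Sum>w\<in>Omega. p w * sum c (set (take (na_stop_time U f Omega X \<delta> \<sigma> w) \<sigma>)))"

text \<open>Adaptive policies: the next item is a function of the history of (item, realization) pairs.\<close>
type_synonym policy = "(nat \<times> nat) list \<Rightarrow> nat"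

fun hist :: "policy \<Rightarrow> (nat \<Rightarrow> nat \<Rightarrow> nat) \<Rightarrow> nat \<Rightarrow> nat \<Rightarrow> (nat \<times> nat) list" where
  "hist \<pi> X w 0 = []"
| "hist \<pi> X w (Suc k) = (let h = hist \<pi> X w k in h @ [(\<pi> h, X (\<pi> h) w)])"

definition full_covered :: "nat set \<Rightarrow> (nat set \<Rightarrow> nat) \<Rightarrow> policy \<Rightarrow> (nat \<Rightarrow> nat \<Rightarrow> nat) \<Rightarrow> nat \<Rightarrow> nat \<Rightarrow> bool" where
  "full_covered U f \<pi> X w k \<longleftrightarrow> f (snd ` set (hist \<pi> X w k)) = f U"

definition adaptive_valid ::
  "nat set \<Rightarrow> (nat set \<Rightarrow> nat) \<Rightarrow> nat set \<Rightarrow> nat set \<Rightarrow> (nat \<Rightarrow> nat \<Rightarrow> nat) \<Rightarrow> policy \<Rightarrow> bool" where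
  "adaptive_valid U f I Omega X \<pi> \<longleftrightarrow>
     (\<forall>w\<in>Omega. \<exists>k. full_covered U f \<pi> X w k \<and> (\<forall>j<k. \<pi> (hist \<pi> X w j) \<in> I))"

definition adaptive_cost ::
  "nat set \<Rightarrow> (nat set \<Rightarrow> nat) \<Rightarrow> nat set \<Rightarrow> (nat \<Rightarrow> real) \<Rightarrow> (nat \<Rightarrow> real)
   \<Rightarrow> (nat \<Rightarrow> nat \<Rightarrow> nat) \<Rightarrow> policy \<Rightarrow> real" where
  "adaptive_cost U f Omega c p X \<pi> =
     (\<Sum>w\<in>Omega. p w * sum c (fst ` set (hist \<pi> X w (LEAST k. full_covered U f \<pi> X w k))))"

definition opt_adaptive ::
  "nat set \<Rightarrow> (nat set \<Rightarrow> nat) \<Rightarrow> nat set \<Rightarrow> nat set \<Rightarrow> (nat \<Rightarrow> real) \<Rightarrow> (nat \<Rightarrow> real)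
   \<Rightarrow> (nat \<Rightarrow> nat \<Rightarrow> nat) \<Rightarrow> real" where
  "opt_adaptive U f I Omega c p X =
     Inf {adaptive_cost U f Omega c p X \<pi> | \<pi>. adaptive_valid U f I Omega X \<pi>}"

end

theory Submission
  imports Defs "HOL-Library.FuncSet"
begin

text \<open>Take an optimal adaptive policy and cut its decision path in scenario w at the first
node whose class of scenarios with the same history has fewer than \<delta>s members, or where f is
covered. Let T w (\<open>trunc_items\<close>) be the items on the truncated path and D w (\<open>trunc_cost\<close>)
their cost. Once all of T w has been probed, the partial stopping condition holds in w. Order
the items by the least D w of a truncated path containing them; then in scenario w the order
stops after probing only items of truncated paths of cost at most D w. Each of them is probed
at a node whose class has at least \<delta>s scenarios, and the items whose classes contain a fixed
scenario all lie on one such path, so double counting bounds their total cost by D w / \<delta>.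
The non-adaptive cost is therefore at most the optimal adaptive cost divided by \<delta>.\<close>

lemma length_hist [simp]: "length (hist \<pi> X w n) = n"
  by (induction n) (auto simp: Let_def)

lemma take_hist: "k \<le> n \<Longrightarrow> take k (hist \<pi> X w n) = hist \<pi> X w k"
  by (induction n) (auto simp: Let_def le_Suc_eq)

lemma hist_eq_if_longer_hist_eq:
  "hist \<pi> X w' n = hist \<pi> X w n \<Longrightarrow> k \<le> n \<Longrightarrow> hist \<pi> X w' k = hist \<pi> X w k"
  using take_hist[of k n \<pi> X w'] take_hist[of k n \<pi> X w] by simp

lemma set_hist:
  "set (hist \<pi> X w n) = (\<lambda>k. (\<pi> (hist \<pi> X w k), X (\<pi> (hist \<pi> X w k)) w)) ` {..<n}"
  by (induction n) (auto simp: Let_def lessThan_Suc)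

lemma fst_set_hist: "fst ` set (hist \<pi> X w n) = (\<lambda>k. \<pi> (hist \<pi> X w k)) ` {..<n}"
  by (simp add: set_hist image_image)

lemma snd_set_hist: "snd ` set (hist \<pi> X w n) = (\<lambda>e. X e w) ` fst ` set (hist \<pi> X w n)"
  by (simp add: set_hist image_image)

lemma hist_eq_if_probes_agree:
  "(\<And>k. k < n \<Longrightarrow> X (\<pi> (hist \<pi> X w k)) w' = X (\<pi> (hist \<pi> X w k)) w)
    \<Longrightarrow> hist \<pi> X w' n = hist \<pi> X w n"
  by (induction n) (auto simp: Let_def)

lemma adaptive_valid_cover_time:
  assumes "adaptive_valid U f I Om X \<pi>" and "w \<in> Om"
  shows "full_covered U f \<pi> X w (LEAST k. full_covered U f \<pi> X w k)"
    and "\<And>k. k < (LEAST k. full_covered U f \<pi> X w k) \<Longrightarrow> \<pi> (hist \<pi> X w k) \<in> I"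
proof -
  obtain n where n: "full_covered U f \<pi> X w n" "\<forall>k<n. \<pi> (hist \<pi> X w k) \<in> I"
    using assms unfolding adaptive_valid_def by blast
  from n(1) show "full_covered U f \<pi> X w (LEAST k. full_covered U f \<pi> X w k)"
    by (rule LeastI)
  have "(LEAST k. full_covered U f \<pi> X w k) \<le> n"
    using n(1) by (rule Least_le)
  then show "\<pi> (hist \<pi> X w k) \<in> I" if "k < (LEAST k. full_covered U f \<pi> X w k)" for k
    using that n(2) by simp
qed

lemma sum_le_by_double_counting:
  fixes c :: "'a \<Rightarrow> real" and S :: "'a \<Rightarrow> 'b set" and \<delta> :: real
  assumes "finite A" and "finite Om" and "Om \<noteq> {}" and "0 < \<delta>"
    and nonneg: "\<And>e. e \<in> A \<Longrightarrow> 0 \<le> c e"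
    and large: "\<And>e. e \<in> A \<Longrightarrow> S e \<subseteq> Om \<and> \<delta> * card Om \<le> card (S e)"
    and light: "\<And>w. w \<in> Om \<Longrightarrow> sum c {e\<in>A. w \<in> S e} \<le> D"
  shows "sum c A \<le> D / \<delta>"
proof -
  have "\<delta> * card Om * sum c A = (\<Sum>e\<in>A. c e * (\<delta> * card Om))"
    by (simp add: sum_distrib_right mult.commute)
  also have "\<dots> \<le> (\<Sum>e\<in>A. c e * card (S e))"
    by (intro sum_mono mult_left_mono) (use nonneg large in auto)
  also have "\<dots> = (\<Sum>e\<in>A. \<Sum>w\<in>{w\<in>Om. w \<in> S e}. c e)"
    using large by (intro sum.cong refl) (simp add: Collect_conj_eq Int_absorb1)
  also have "\<dots> = (\<Sum>w\<in>Om. sum c {e\<in>A. w \<in> S e})"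
    by (rule sum.swap_restrict) (use assms in auto)
  also have "\<dots> \<le> card Om * D"
    using sum_mono[of Om _ "\<lambda>_. D"] light by simp
  finally have "\<delta> * sum c A \<le> D"
    using assms(2,3) by (simp add: card_gt_0_iff mult.assoc)
  then show ?thesis
    using \<open>0 < \<delta>\<close> by (simp add: field_simps)
qed

lemma sorted_key_prefix:
  fixes key :: "'a \<Rightarrow> 'b::linorder"
  assumes "sorted (map key xs)"
  obtains n where "set (take n xs) = {x \<in> set xs. key x \<le> t}"
proof
  from assms
  have takeWhile_filter: "takeWhile (\<lambda>x. key x \<le> t) xs = filter (\<lambda>x. key x \<le> t) xs"
  proof (induction xs)
    case (Cons a xs)
    then have a_least: "\<forall>x\<in>set xs. key a \<le> key x"
      and IH: "takeWhile (\<lambda>x. key x \<le> t) xs = filter (\<lambda>x. key x \<le> t) xs"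
      by simp_all
    show ?case
    proof (cases "key a \<le> t")
      case False
      have "\<not> key x \<le> t" if "x \<in> set xs" for x
        using a_least that False by (meson order_trans)
      with False show ?thesis
        by (simp add: filter_empty_conv)
    qed (simp add: IH)
  qed simp
  show "set (take (length (takeWhile (\<lambda>x. key x \<le> t) xs)) xs) = {x \<in> set xs. key x \<le> t}"
    using takeWhile_eq_take[of "\<lambda>x. key x \<le> t" xs] takeWhile_filter by simp
qed

locale ssc_policy =
  fixes U :: "nat set" and f :: "nat set \<Rightarrow> nat" and I Om :: "nat set"
    and c p :: "nat \<Rightarrow> real" and X :: "nat \<Rightarrow> nat \<Rightarrow> nat" and \<delta> :: real and \<pi> :: policy
  assumes ssc: "ssc_instance U f I Om c p X"
    and delta_pos: "0 < \<delta>"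
    and valid: "adaptive_valid U f I Om X \<pi>"
begin

lemma finite_I: "finite I" and finite_Om: "finite Om" and Om_nonempty: "Om \<noteq> {}"
  and cost_nonneg: "\<And>e. e \<in> I \<Longrightarrow> 0 \<le> c e"
  and prob_nonneg: "\<And>w. w \<in> Om \<Longrightarrow> 0 \<le> p w"
  and realization_in_U: "\<And>e w. e \<in> I \<Longrightarrow> w \<in> Om \<Longrightarrow> X e w \<in> U"
  and f_mono: "\<And>A B. A \<subseteq> B \<Longrightarrow> B \<subseteq> U \<Longrightarrow> f A \<le> f B"
  using ssc unfolding ssc_instance_def by (auto intro: less_imp_le)

abbreviation probe :: "nat \<Rightarrow> nat \<Rightarrow> nat" where
  "probe w k \<equiv> \<pi> (hist \<pi> X w k)"

definition cover_time :: "nat \<Rightarrow> nat" where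
  "cover_time w = (LEAST k. full_covered U f \<pi> X w k)"

definition hist_class :: "nat \<Rightarrow> nat \<Rightarrow> nat set" where
  "hist_class w k = {w' \<in> Om. hist \<pi> X w' k = hist \<pi> X w k}"

definition trunc_depth :: "nat \<Rightarrow> nat" where
  "trunc_depth w = (LEAST k. k = cover_time w \<or> card (hist_class w k) < \<delta> * card Om)"

definition trunc_items :: "nat \<Rightarrow> nat set" where
  "trunc_items w = probe w ` {..<trunc_depth w}"

definition trunc_cost :: "nat \<Rightarrow> real" where
  "trunc_cost w = sum c (trunc_items w)"

lemma trunc_depth_le_cover_time: "trunc_depth w \<le> cover_time w"
  unfolding trunc_depth_def by (rule Least_le) simp

lemma trunc_depth_cases:
  "trunc_depth w = cover_time w \<or> card (hist_class w (trunc_depth w)) < \<delta> * card Om"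
  unfolding trunc_depth_def by (rule LeastI[where k = "cover_time w"]) simp

lemma hist_class_large:
  "k < trunc_depth w \<Longrightarrow> \<delta> * card Om \<le> card (hist_class w k)"
  using not_less_Least[of k "\<lambda>k. k = cover_time w \<or> card (hist_class w k) < \<delta> * card Om"]
  unfolding trunc_depth_def by auto

lemma probe_in_I: "w \<in> Om \<Longrightarrow> k < cover_time w \<Longrightarrow> probe w k \<in> I"
  using adaptive_valid_cover_time(2)[OF valid] unfolding cover_time_def by blast

lemma trunc_items_subset: "w \<in> Om \<Longrightarrow> trunc_items w \<subseteq> I"
  unfolding trunc_items_def using probe_in_I trunc_depth_le_cover_time
  by (auto intro: less_le_trans)

lemma trunc_cost_nonneg: "w \<in> Om \<Longrightarrow> 0 \<le> trunc_cost w"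
  unfolding trunc_cost_def using trunc_items_subset cost_nonneg by (intro sum_nonneg) auto

lemma trunc_cost_le_path_cost:
  assumes "w \<in> Om"
  shows "trunc_cost w \<le> sum c (fst ` set (hist \<pi> X w (cover_time w)))"
proof -
  have "trunc_items w \<subseteq> fst ` set (hist \<pi> X w (cover_time w))"
    unfolding trunc_items_def fst_set_hist
    using trunc_depth_le_cover_time by (intro image_mono) auto
  moreover have "fst ` set (hist \<pi> X w (cover_time w)) \<subseteq> I"
    unfolding fst_set_hist using assms probe_in_I by auto
  ultimately show ?thesis
    unfolding trunc_cost_def using cost_nonneg by (intro sum_mono2) auto
qed

lemma partial_stop_if_trunc_items_subset:
  assumes w: "w \<in> Om" and "trunc_items w \<subseteq> A" and "A \<subseteq> I"
  shows "partial_stop U f Om X \<delta> A w"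
  using trunc_depth_cases[of w]
proof
  assume covered: "trunc_depth w = cover_time w"
  have "f U = f ((\<lambda>e. X e w) ` trunc_items w)"
    using adaptive_valid_cover_time(1)[OF valid w] covered
    unfolding full_covered_def snd_set_hist fst_set_hist cover_time_def trunc_items_def by simp
  also have "\<dots> \<le> f ((\<lambda>e. X e w) ` A)"
    using assms realization_in_U by (intro f_mono) auto
  finally have "f U \<le> f ((\<lambda>e. X e w) ` A)" .
  moreover have "f ((\<lambda>e. X e w) ` A) \<le> f U"
    using assms realization_in_U by (intro f_mono) auto
  ultimately show ?thesis
    unfolding partial_stop_def by simp
next
  assume small: "card (hist_class w (trunc_depth w)) < \<delta> * card Om"
  have "compat X Om A w \<subseteq> hist_class w (trunc_depth w)"
    using assms unfolding compat_def hist_class_def trunc_items_def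
    by (auto intro!: hist_eq_if_probes_agree)
  then have "card (compat X Om A w) \<le> card (hist_class w (trunc_depth w))"
    by (intro card_mono) (auto simp: hist_class_def finite_Om)
  with small show ?thesis
    unfolding partial_stop_def by linarith
qed

lemma probes_through_scenario_on_one_path:
  assumes "finite E" and "E \<noteq> {}"
    and "\<And>e. e \<in> E \<Longrightarrow>
      k e < trunc_depth (v e) \<and> probe (v e) (k e) = e \<and> w \<in> hist_class (v e) (k e)"
  obtains e0 where "e0 \<in> E" and "E \<subseteq> trunc_items (v e0)"
proof -
  obtain e0 where e0: "e0 \<in> E" and "Max (k ` E) = k e0"
    by (rule obtains_MAX[OF assms(1,2)])
  then have deepest: "k e \<le> k e0" if "e \<in> E" for e
    using that assms(1) by (metis Max_ge finite_imageI imageI)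
  have "e \<in> trunc_items (v e0)" if e: "e \<in> E" for e
  proof -
    have "hist \<pi> X w (k e0) = hist \<pi> X (v e0) (k e0)"
      using assms(3)[OF e0] by (simp add: hist_class_def)
    then have "hist \<pi> X w (k e) = hist \<pi> X (v e0) (k e)"
      using deepest[OF e] by (rule hist_eq_if_longer_hist_eq)
    moreover have "hist \<pi> X w (k e) = hist \<pi> X (v e) (k e)"
      using assms(3)[OF e] by (simp add: hist_class_def)
    ultimately have "e = probe (v e0) (k e)"
      using assms(3)[OF e] by simp
    moreover have "k e < trunc_depth (v e0)"
      using deepest[OF e] assms(3)[OF e0] by simp
    ultimately show ?thesis
      unfolding trunc_items_def by blast
  qed
  with e0 that show ?thesis by blast
qed

lemma sum_probes_through_scenario_le:
  assumes "finite E" and "0 \<le> t"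
    and "\<And>e. e \<in> E \<Longrightarrow> v e \<in> Om \<and> trunc_cost (v e) \<le> t \<and>
      k e < trunc_depth (v e) \<and> probe (v e) (k e) = e \<and> w \<in> hist_class (v e) (k e)"
  shows "sum c E \<le> t"
proof (cases "E = {}")
  case False
  obtain e0 where "e0 \<in> E" and on_path: "E \<subseteq> trunc_items (v e0)"
  proof (rule probes_through_scenario_on_one_path[OF assms(1) False])
    show "k e < trunc_depth (v e) \<and> probe (v e) (k e) = e \<and> w \<in> hist_class (v e) (k e)"
      if "e \<in> E" for e
      using assms(3)[OF that] by blast
  qed
  then have e0: "v e0 \<in> Om" "trunc_cost (v e0) \<le> t"
    using assms(3) by blast+
  have "sum c E \<le> trunc_cost (v e0)"
    unfolding trunc_cost_def using on_path trunc_items_subset[OF e0(1)] cost_nonneg finite_I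
    by (intro sum_mono2) (auto intro: finite_subset)
  with e0(2) show ?thesis
    by linarith
qed (simp add: assms(2))

lemma trunc_items_union_cost_le:
  assumes "0 \<le> t"
  shows "sum c (\<Union>w\<in>{w\<in>Om. trunc_cost w \<le> t}. trunc_items w) \<le> t / \<delta>"
proof -
  define A where "A = (\<Union>w\<in>{w\<in>Om. trunc_cost w \<le> t}. trunc_items w)"
  have A_subset: "A \<subseteq> I"
    using trunc_items_subset by (auto simp: A_def)
  then have "finite A"
    using finite_I finite_subset by blast
  have "\<forall>e\<in>A. \<exists>v k. v \<in> Om \<and> trunc_cost v \<le> t \<and> k < trunc_depth v \<and> probe v k = e"
    unfolding A_def trunc_items_def by blast
  then obtain v where "\<forall>e\<in>A. \<exists>k.
      v e \<in> Om \<and> trunc_cost (v e) \<le> t \<and> k < trunc_depth (v e) \<and> probe (v e) k = e"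
    by (rule bchoice[elim_format]) blast
  then obtain k where vk: "\<And>e. e \<in> A \<Longrightarrow>
      v e \<in> Om \<and> trunc_cost (v e) \<le> t \<and> k e < trunc_depth (v e) \<and> probe (v e) (k e) = e"
    by (rule bchoice[elim_format]) blast
  have "sum c A \<le> t / \<delta>"
  proof (rule sum_le_by_double_counting[where S = "\<lambda>e. hist_class (v e) (k e)"])
    show "finite A" "finite Om" "Om \<noteq> {}" "0 < \<delta>"
      by (fact \<open>finite A\<close> finite_Om Om_nonempty delta_pos)+
    show "0 \<le> c e" if "e \<in> A" for e
      using that A_subset cost_nonneg by blast
    show "hist_class (v e) (k e) \<subseteq> Om \<and> \<delta> * card Om \<le> card (hist_class (v e) (k e))"
      if "e \<in> A" for e
      using hist_class_large vk[OF that] by (auto simp: hist_class_def)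
    show "sum c {e \<in> A. w \<in> hist_class (v e) (k e)} \<le> t" for w
      by (rule sum_probes_through_scenario_le[where v = v and k = k and w = w])
        (use \<open>finite A\<close> assms vk in simp_all)
  qed
  then show ?thesis
    unfolding A_def .
qed

text \<open>Items on no truncated path get the key \<open>sum c I + 1\<close>, which exceeds every truncated
cost, so they come last.\<close>
definition key :: "nat \<Rightarrow> real" where
  "key e = Min (insert (sum c I + 1) (trunc_cost ` {w \<in> Om. e \<in> trunc_items w}))"

definition probe_order :: "nat list" where
  "probe_order = sort_key key (sorted_list_of_set I)"

lemma distinct_probe_order: "distinct probe_order"
  and set_probe_order: "set probe_order = I"
  and sorted_probe_order: "sorted (map key probe_order)"
  unfolding probe_order_def using finite_I by auto

lemma key_le_trunc_cost: "w \<in> Om \<Longrightarrow> e \<in> trunc_items w \<Longrightarrow> key e \<le> trunc_cost w"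
  unfolding key_def using finite_Om by (intro Min_le) auto

lemma key_le_trunc_costD:
  assumes w: "w \<in> Om" and "key e \<le> trunc_cost w"
  shows "\<exists>v\<in>Om. e \<in> trunc_items v \<and> trunc_cost v \<le> trunc_cost w"
proof -
  have "trunc_cost w \<le> sum c I"
    unfolding trunc_cost_def using trunc_items_subset[OF w] cost_nonneg finite_I
    by (intro sum_mono2) auto
  with assms have "key e \<noteq> sum c I + 1"
    by linarith
  moreover have "key e \<in> insert (sum c I + 1) (trunc_cost ` {v \<in> Om. e \<in> trunc_items v})"
    unfolding key_def using finite_Om by (intro Min_in) auto
  ultimately show ?thesis
    using assms by auto
qed

lemma na_stop_cost_le:
  assumes w: "w \<in> Om"
  shows "sum c (set (take (na_stop_time U f Om X \<delta> probe_order w) probe_order))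
    \<le> trunc_cost w / \<delta>"
proof -
  obtain n where prefix: "set (take n probe_order) = {e \<in> I. key e \<le> trunc_cost w}"
    using sorted_key_prefix[OF sorted_probe_order] set_probe_order by metis
  have "partial_stop U f Om X \<delta> (set (take n probe_order)) w"
    unfolding prefix using w trunc_items_subset key_le_trunc_cost
    by (intro partial_stop_if_trunc_items_subset) auto
  then have "na_stop_time U f Om X \<delta> probe_order w \<le> n"
    unfolding na_stop_time_def by (rule Least_le)
  then have "set (take (na_stop_time U f Om X \<delta> probe_order w) probe_order)
      \<subseteq> {e \<in> I. key e \<le> trunc_cost w}"
    using set_take_subset_set_take prefix by metis
  also have "\<dots> \<subseteq> (\<Union>v\<in>{v \<in> Om. trunc_cost v \<le> trunc_cost w}. trunc_items v)"
    using key_le_trunc_costD[OF w] by blast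
  finally have "sum c (set (take (na_stop_time U f Om X \<delta> probe_order w) probe_order))
      \<le> sum c (\<Union>v\<in>{v \<in> Om. trunc_cost v \<le> trunc_cost w}. trunc_items v)"
    using trunc_items_subset cost_nonneg finite_I
    by (intro sum_mono2) (auto intro: finite_subset)
  also have "\<dots> \<le> trunc_cost w / \<delta>"
    by (rule trunc_items_union_cost_le[OF trunc_cost_nonneg[OF w]])
  finally show ?thesis .
qed

lemma na_partial_cost_le_adaptive_cost:
  "na_partial_cost U f Om c p X \<delta> probe_order \<le> adaptive_cost U f Om c p X \<pi> / \<delta>"
proof -
  have "na_partial_cost U f Om c p X \<delta> probe_order \<le> (\<Sum>w\<in>Om. p w * (trunc_cost w / \<delta>))"
    unfolding na_partial_cost_def using prob_nonneg na_stop_cost_le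
    by (intro sum_mono mult_left_mono) auto
  also have "\<dots> \<le> (\<Sum>w\<in>Om. p w * (sum c (fst ` set (hist \<pi> X w (cover_time w))) / \<delta>))"
    using prob_nonneg trunc_cost_le_path_cost delta_pos
    by (intro sum_mono mult_left_mono divide_right_mono) auto
  also have "\<dots> = adaptive_cost U f Om c p X \<pi> / \<delta>"
    unfolding adaptive_cost_def cover_time_def
    by (simp only: times_divide_eq_right flip: sum_divide_distrib)
  finally show ?thesis .
qed

lemma adaptive_cost_nonneg: "0 \<le> adaptive_cost U f Om c p X \<pi>"
  unfolding adaptive_cost_def cover_time_def[symmetric] fst_set_hist
  using prob_nonneg probe_in_I cost_nonneg
  by (intro sum_nonneg mult_nonneg_nonneg) auto

end

lemma adaptive_valid_exists:
  assumes ssc: "ssc_instance U f I Om c p X"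
  shows "\<exists>\<pi>. adaptive_valid U f I Om X \<pi>"
proof -
  define L where "L = sorted_list_of_set I"
  have "finite I"
    using ssc unfolding ssc_instance_def by simp
  then have set_L: "set L = I"
    unfolding L_def by simp
  define \<pi> :: policy where "\<pi> h = L ! length h" for h
  have probe: "\<pi> (hist \<pi> X w k) = L ! k" for w k
    unfolding \<pi>_def by simp
  have "fst ` set (hist \<pi> X w (length L)) = I" for w
    unfolding fst_set_hist probe using set_L by (auto simp: set_conv_nth)
  then have "full_covered U f \<pi> X w (length L) \<and> (\<forall>k<length L. \<pi> (hist \<pi> X w k) \<in> I)"
    if "w \<in> Om" for w
    using ssc that set_L unfolding full_covered_def snd_set_hist probe ssc_instance_def by auto
  then show ?thesis
    unfolding adaptive_valid_def by blast
qed

lemma finite_adaptive_costs: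
  assumes ssc: "ssc_instance U f I Om c p X"
  shows "finite {adaptive_cost U f Om c p X \<pi> | \<pi>. adaptive_valid U f I Om X \<pi>}"
proof -
  have "finite I" and "finite Om"
    using ssc unfolding ssc_instance_def by auto
  have "{adaptive_cost U f Om c p X \<pi> | \<pi>. adaptive_valid U f I Om X \<pi>}
      \<subseteq> (\<lambda>T. \<Sum>w\<in>Om. p w * sum c (T w)) ` (Om \<rightarrow>\<^sub>E Pow I)"
  proof clarify
    fix \<pi> assume valid: "adaptive_valid U f I Om X \<pi>"
    define T where
      "T = restrict (\<lambda>w. fst ` set (hist \<pi> X w (LEAST k. full_covered U f \<pi> X w k))) Om"
    have "T \<in> Om \<rightarrow>\<^sub>E Pow I"
      unfolding T_def fst_set_hist using adaptive_valid_cover_time(2)[OF valid] by auto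
    moreover have "adaptive_cost U f Om c p X \<pi> = (\<Sum>w\<in>Om. p w * sum c (T w))"
      unfolding adaptive_cost_def T_def by (intro sum.cong) auto
    ultimately show "adaptive_cost U f Om c p X \<pi>
        \<in> (\<lambda>T. \<Sum>w\<in>Om. p w * sum c (T w)) ` (Om \<rightarrow>\<^sub>E Pow I)"
      by blast
  qed
  moreover have "finite (Om \<rightarrow>\<^sub>E Pow I)"
    using \<open>finite I\<close> \<open>finite Om\<close> by (intro finite_PiE) auto
  ultimately show ?thesis
    using finite_subset by blast
qed

lemma opt_adaptive_attained:
  assumes "ssc_instance U f I Om c p X"
  obtains \<pi> where "adaptive_valid U f I Om X \<pi>"
    and "opt_adaptive U f I Om c p X = adaptive_cost U f Om c p X \<pi>"
proof -
  let ?V = "{adaptive_cost U f Om c p X \<pi> | \<pi>. adaptive_valid U f I Om X \<pi>}"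
  have "finite ?V" and "?V \<noteq> {}"
    using finite_adaptive_costs adaptive_valid_exists assms by auto
  then have "opt_adaptive U f I Om c p X = Min ?V"
    unfolding opt_adaptive_def by (rule cInf_eq_Min)
  moreover have "Min ?V \<in> ?V"
    using \<open>finite ?V\<close> \<open>?V \<noteq> {}\<close> by (rule Min_in)
  ultimately show ?thesis
    using that by auto
qed

theorem mainTheorem4:
  shows "\<exists>C>0. \<forall>U f I Omega c p X (\<delta>::real).
     ssc_instance U f I Omega c p X \<and> 0 < \<delta> \<and> \<delta> < 1 \<longrightarrow>
     (\<exists>\<sigma>. distinct \<sigma> \<and> set \<sigma> = I \<and>
        na_partial_cost U f Omega c p X \<delta> \<sigma>
          \<le> C * ((1 / \<delta>) * (1 + ln (1 / \<delta>) + ln (max 1 (real (f U)))))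
              * opt_adaptive U f I Omega c p X)"
proof (intro exI[of _ 1] conjI allI impI)
  fix U f I Omega c p X and \<delta> :: real
  assume "ssc_instance U f I Omega c p X \<and> 0 < \<delta> \<and> \<delta> < 1"
  then have ssc: "ssc_instance U f I Omega c p X" and \<delta>: "0 < \<delta>" "\<delta> < 1"
    by auto
  obtain \<pi> where valid: "adaptive_valid U f I Omega X \<pi>"
    and opt: "opt_adaptive U f I Omega c p X = adaptive_cost U f Omega c p X \<pi>"
    using opt_adaptive_attained[OF ssc] by blast
  interpret ssc_policy U f I Omega c p X \<delta> \<pi>
    using ssc \<delta> valid by unfold_locales
  have "1 \<le> 1 + ln (1 / \<delta>) + ln (max 1 (real (f U)))"
    using \<delta> by simp
  from mult_right_mono[OF this adaptive_cost_nonneg]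
  have "adaptive_cost U f Omega c p X \<pi> / \<delta>
      \<le> (1 + ln (1 / \<delta>) + ln (max 1 (real (f U)))) * adaptive_cost U f Omega c p X \<pi> / \<delta>"
    using \<delta>(1) by (simp add: divide_right_mono)
  then have "adaptive_cost U f Omega c p X \<pi> / \<delta>
      \<le> 1 * ((1 / \<delta>) * (1 + ln (1 / \<delta>) + ln (max 1 (real (f U))))) * opt_adaptive U f I Omega c p X"
    unfolding opt by simp
  with na_partial_cost_le_adaptive_cost distinct_probe_order set_probe_order
  show "\<exists>\<sigma>. distinct \<sigma> \<and> set \<sigma> = I \<and>
        na_partial_cost U f Omega c p X \<delta> \<sigma>
          \<le> 1 * ((1 / \<delta>) * (1 + ln (1 / \<delta>) + ln (max 1 (real (f U)))))
              * opt_adaptive U f I Omega c p X"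
    by (meson order_trans)
qed simp

end
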